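(* Let $\lambda>0$ and let $q_1,\dots,q_n>0$. For a permutation $\pi$ of $\{1,\dots,n\}$ consider the power profile $p_\ell=q_{\pi(\ell)}$ and $$\gamma(\pi)=\min_{\ell=1,\dots,n}\frac{p_\ell}{1+\lambda\sum_{j=\ell+1}^np_j}.$$ Then $\gamma(\pi)$ is maximized over all permutations $\pi$ by any $\pi$ for which $p_1\ge p_2\ge\dots\ge p_n$. *)

theory Defs
  imports Complex_Main "HOL-Combinatorics.Permutations"
begin

definition gamma :: "real \<Rightarrow> nat \<Rightarrow> (nat \<Rightarrow> real) \<Rightarrow> (nat \<Rightarrow> nat) \<Rightarrow> real" where
  "gamma lam n q \<pi> = (MIN l\<in>{1..n}. q (\<pi> l) / (1 + lam * (\<Sum>j=l+1..n. q (\<pi> j))))"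

end

theory Submission
  imports Defs
begin

(* Write t(f,l) = q (f l) / (1 + lam * (sum of q (f j) for j = l+1..n)) for the
   l-th term of gamma, so that gamma(f) is the minimum of t(f,l) over l.  Let pi be sorted
   decreasingly and sigma arbitrary.  It suffices to dominate every term of pi by some term of
   sigma.  Fix l and let A = pi{l..n}, the set of the n-l+1 smallest powers.  Let l' be the
   first position at which sigma places an element of A.  Then q (sigma l') <= q (pi l), since
   pi l is the largest element of A, and all of A except sigma l' is placed by sigma after l',
   so the tail sum of sigma after l' is at least sum(A) - q (sigma l') >= sum(A) - q (pi l),
   which is the tail sum of pi after l.  Smaller numerator and larger denominator give
   t(sigma,l') <= t(pi,l). *)

definition gamma_term :: "real \<Rightarrow> nat \<Rightarrow> (nat \<Rightarrow> real) \<Rightarrow> (nat \<Rightarrow> nat) \<Rightarrow> nat \<Rightarrow> real" where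
  "gamma_term lam n q f l = q (f l) / (1 + lam * (\<Sum>j=l+1..n. q (f j)))"

lemma gamma_eq_Min_gamma_term: "gamma lam n q f = (MIN l\<in>{1..n}. gamma_term lam n q f l)"
  unfolding gamma_def gamma_term_def ..

lemma antitone_from_steps:
  fixes g :: "nat \<Rightarrow> 'a::preorder"
  assumes step: "\<And>k. k \<in> {a..<b} \<Longrightarrow> g (k+1) \<le> g k"
    and "a \<le> l" "l \<le> j" "j \<le> b"
  shows "g j \<le> g l"
  using assms(3,4)
proof (induction j rule: dec_induct)
  case base
  show ?case by simp
next
  case (step m)
  have "g (m+1) \<le> g m" using assms(2) step.hyps step.prems by (intro assms(1)) auto
  then show ?case using step.IH step.prems order_trans by fastforce
qed

lemma first_hit_position:
  fixes \<sigma> :: "nat \<Rightarrow> nat" and n :: nat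
  assumes \<sigma>: "\<sigma> permutes {1..n}" and A: "A \<subseteq> {1..n}" "x \<in> A"
  obtains l' where "l' \<in> {1..n}" "\<sigma> l' \<in> A" "A - {\<sigma> l'} \<subseteq> \<sigma> ` {l'+1..n}"
proof -
  define K where "K = {k\<in>{1..n}. \<sigma> k \<in> A}"
  have hit: "y \<in> \<sigma> ` K" if "y \<in> A" for y
  proof -
    have "y \<in> \<sigma> ` {1..n}" using that A(1) permutes_image[OF \<sigma>] by auto
    then show ?thesis using that unfolding K_def by auto
  qed
  have "finite K" unfolding K_def by simp
  moreover have "K \<noteq> {}" using hit[OF A(2)] by auto
  ultimately have l'K: "Min K \<in> K" and first: "\<And>k. k \<in> K \<Longrightarrow> Min K \<le> k" by auto
  have "A - {\<sigma> (Min K)} \<subseteq> \<sigma> ` {Min K + 1..n}"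
  proof
    fix y assume "y \<in> A - {\<sigma> (Min K)}"
    then obtain k where k: "k \<in> K" "y = \<sigma> k" "k \<noteq> Min K" using hit by blast
    have "Min K < k" using first[OF k(1)] k(3) by linarith
    moreover have "k \<le> n" using k(1) unfolding K_def by simp
    ultimately show "y \<in> \<sigma> ` {Min K + 1..n}" using k(2) by auto
  qed
  then show ?thesis using that l'K unfolding K_def by blast
qed

lemma sum_le_sum_over_image:
  fixes q :: "'b \<Rightarrow> 'c::ordered_comm_monoid_add"
  assumes "finite S" "inj_on f S" "B \<subseteq> f ` S" "\<And>x. x \<in> f ` S \<Longrightarrow> 0 \<le> q x"
  shows "(\<Sum>x\<in>B. q x) \<le> (\<Sum>j\<in>S. q (f j))"
proof -
  have "(\<Sum>x\<in>B. q x) \<le> (\<Sum>x\<in>f ` S. q x)"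
    using assms by (intro sum_mono2) auto
  also have "\<dots> = (\<Sum>j\<in>S. q (f j))"
    using assms(2) by (simp add: sum.reindex)
  finally show ?thesis .
qed

lemma interference_fraction_mono:
  fixes lam a b s t :: real
  assumes "0 \<le> lam" "0 \<le> b" "b \<le> a" "0 \<le> s" "s \<le> t"
  shows "b / (1 + lam * t) \<le> a / (1 + lam * s)"
proof (rule frac_le)
  show "0 < 1 + lam * s" using assms by (smt (verit) mult_nonneg_nonneg)
  show "1 + lam * s \<le> 1 + lam * t" using assms by (simp add: mult_left_mono)
qed (use assms in auto)

lemma sorted_term_dominates:
  fixes q :: "nat \<Rightarrow> real" and \<pi> \<sigma> :: "nat \<Rightarrow> nat"
  assumes lam: "0 \<le> lam" and qpos: "\<And>i. i \<in> {1..n} \<Longrightarrow> 0 < q i"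
    and \<pi>: "\<pi> permutes {1..n}" and \<sigma>: "\<sigma> permutes {1..n}"
    and sorted: "\<And>k. k \<in> {1..<n} \<Longrightarrow> q (\<pi> (k+1)) \<le> q (\<pi> k)"
    and l: "l \<in> {1..n}"
  shows "\<exists>l'\<in>{1..n}. gamma_term lam n q \<sigma> l' \<le> gamma_term lam n q \<pi> l"
proof -
  define A where "A = \<pi> ` {l..n}"
  have A_sub: "A \<subseteq> {1..n}" using l permutes_image[OF \<pi>] unfolding A_def by auto
  have "\<pi> l \<in> A" using l unfolding A_def by auto
  then obtain l' where l': "l' \<in> {1..n}" "\<sigma> l' \<in> A" and later: "A - {\<sigma> l'} \<subseteq> \<sigma> ` {l'+1..n}"
    using first_hit_position[OF \<sigma> A_sub] by blast
  have q_nonneg: "0 \<le> q x" if "x \<in> f ` {1..n}" "f permutes {1..n}" for f x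
    using qpos[of x] that permutes_image[OF that(2)] by fastforce
  have numerator: "q (\<sigma> l') \<le> q (\<pi> l)"
    using l' l antitone_from_steps[of 1 n "\<lambda>k. q (\<pi> k)", OF sorted] unfolding A_def by auto
  have sum_A: "(\<Sum>x\<in>A. q x) = q (\<pi> l) + (\<Sum>j=l+1..n. q (\<pi> j))"
    using l permutes_inj_on[OF \<pi>]
    by (simp add: A_def sum.reindex inj_on_subset sum.atLeast_Suc_atMost)
  have "(\<Sum>x\<in>A - {\<sigma> l'}. q x) \<le> (\<Sum>j=l'+1..n. q (\<sigma> j))"
    using later l' q_nonneg[OF _ \<sigma>] permutes_inj_on[OF \<sigma>]
    by (intro sum_le_sum_over_image) (auto intro: inj_on_subset)
  moreover have "(\<Sum>x\<in>A - {\<sigma> l'}. q x) = (\<Sum>x\<in>A. q x) - q (\<sigma> l')"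
    using l'(2) unfolding A_def by (simp add: sum_diff1)
  ultimately have interference: "(\<Sum>j=l+1..n. q (\<pi> j)) \<le> (\<Sum>j=l'+1..n. q (\<sigma> j))"
    using sum_A numerator by linarith
  have "0 \<le> (\<Sum>j=l+1..n. q (\<pi> j))"
    using l q_nonneg[OF _ \<pi>] by (intro sum_nonneg) auto
  then have "gamma_term lam n q \<sigma> l' \<le> gamma_term lam n q \<pi> l"
    unfolding gamma_term_def using lam numerator interference qpos l' permutes_in_image[OF \<sigma>]
    by (intro interference_fraction_mono) (auto intro: less_imp_le)
  then show ?thesis using l' by blast
qed

lemma Min_le_Min_if_dominated:
  fixes g h :: "'a \<Rightarrow> 'b::linorder"
  assumes "finite I" "I \<noteq> {}" "\<And>i. i \<in> I \<Longrightarrow> \<exists>j\<in>J. g j \<le> h i" "finite J"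
  shows "(MIN j\<in>J. g j) \<le> (MIN i\<in>I. h i)"
proof -
  have "(MIN j\<in>J. g j) \<le> h i" if "i \<in> I" for i
    using assms(3)[OF that] assms(4) by (meson Min_le finite_imageI image_eqI order_trans)
  then show ?thesis using assms(1,2) by (intro Min.boundedI) auto
qed

theorem mainTheorem5:
  fixes lam :: real and n :: nat and q :: "nat \<Rightarrow> real" and \<pi> :: "nat \<Rightarrow> nat"
  assumes "lam > 0"
    and "n \<ge> 1"
    and "\<And>i. i \<in> {1..n} \<Longrightarrow> q i > 0"
    and "\<pi> permutes {1..n}"
    and "\<And>l. l \<in> {1..<n} \<Longrightarrow> q (\<pi> l) \<ge> q (\<pi> (l+1))"
  shows "\<forall>\<sigma>. \<sigma> permutes {1..n} \<longrightarrow> gamma lam n q \<sigma> \<le> gamma lam n q \<pi>"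
proof (intro allI impI)
  fix \<sigma> assume \<sigma>: "\<sigma> permutes {1..n}"
  have "\<exists>l'\<in>{1..n}. gamma_term lam n q \<sigma> l' \<le> gamma_term lam n q \<pi> l" if "l \<in> {1..n}" for l
    using assms(1,3,4,5) \<sigma> that by (intro sorted_term_dominates) auto
  then show "gamma lam n q \<sigma> \<le> gamma lam n q \<pi>"
    unfolding gamma_eq_Min_gamma_term using assms(2) by (intro Min_le_Min_if_dominated) auto
qed

end
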